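(* A strong erasing word for $(G,\phi)$ exists in each of the following cases: (i) $G$ is a non-bipartite separable graph and $\phi$ is any admissible matching policy; (ii) $G$ is connected and non-bipartite and $\phi=\textsc{lcfm}$.
   Context: $G=(\mathcal V,\mathcal E)$ is a finite connected simple graph, $i - j$ denotes adjacency. $G$ is separable of order $p\ge2$ if $\mathcal V$ is partitioned into maximal independent sets $\mathcal I_1,\dots,\mathcal I_p$ such that any two nodes in different parts are adjacent; a separable graph is non-bipartite iff $p\ge3$. A list of preferences $\sigma\in\mathcal S$ gives for each class a linear ordering of its neighbours; $\phi$ comes with a probability $\nu_\phi$ on $\mathcal S$. $\mathbb W=\{w\in\mathcal V^*:|w|_i|w|_j=0 \text{ whenever } i - j\}$. Admissible $\phi$: a map $\odot_\phi:\mathbb W\times(\mathcal V\times\mathcal S)\to\mathbb W$ with $w\odot_\phi(v,\sigma)=wv$ if no letter of $w$ is adjacent to $v$, otherwise $w$ with one letter adjacent to $v$ (chosen by $\phi$) deleted; LCFM deletes the rightmost letter of $w$ adjacent to $v$. $Q_\phi(z_1\cdots z_k,\varsigma_1\cdots\varsigma_k)=(\cdots(\emptyset\odot_\phi(z_1,\varsigma_1))\cdots)\odot_\phi(z_k,\varsigma_k)$. A word $z\in\mathcal V^*$ of even length $2p$ is a strong erasing word for $(G,\phi)$ if (1) for all non-adjacent $i,j\in\mathcal V$ (possibly $i=j$) and all preference words $\varsigma,\varsigma'$ of lengths $2$ and $2p$ with letters in the support of $\nu_\phi$, $Q_\phi(ijz,\varsigma\varsigma')=\emptyset$; and (2) for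 every $\ell\in\{0,\dots,p-1\}$ and all such $\varsigma'$, $Q_\phi(z_{2\ell+1}\cdots z_{2p},\varsigma'_{2\ell+1}\cdots\varsigma'_{2p})=\emptyset$. *)

theory Defs
  imports "HOL-Probability.Probability_Mass_Function"
begin

definition simple_graph :: "'v set \<Rightarrow> ('v \<Rightarrow> 'v \<Rightarrow> bool) \<Rightarrow> bool" where
  "simple_graph V adj \<longleftrightarrow> finite V \<and> V \<noteq> {} \<and>
     (\<forall>u v. adj u v \<longrightarrow> u \<in> V \<and> v \<in> V) \<and>
     (\<forall>u v. adj u v \<longrightarrow> adj v u) \<and> (\<forall>u. \<not> adj u u)"

definition connected_graph :: "'v set \<Rightarrow> ('v \<Rightarrow> 'v \<Rightarrow> bool) \<Rightarrow> bool" where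
  "connected_graph V adj \<longleftrightarrow> (\<forall>u\<in>V. \<forall>v\<in>V. adj\<^sup>*\<^sup>* u v)"

definition bipartite :: "'v set \<Rightarrow> ('v \<Rightarrow> 'v \<Rightarrow> bool) \<Rightarrow> bool" where
  "bipartite V adj \<longleftrightarrow> (\<exists>f :: 'v \<Rightarrow> bool. \<forall>u\<in>V. \<forall>v\<in>V. adj u v \<longrightarrow> f u \<noteq> f v)"

definition independent_set :: "('v \<Rightarrow> 'v \<Rightarrow> bool) \<Rightarrow> 'v set \<Rightarrow> bool" where
  "independent_set adj I \<longleftrightarrow> (\<forall>u\<in>I. \<forall>v\<in>I. \<not> adj u v)"

definition maximal_independent_set :: "'v set \<Rightarrow> ('v \<Rightarrow> 'v \<Rightarrow> bool) \<Rightarrow> 'v set \<Rightarrow> bool" where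
  "maximal_independent_set V adj I \<longleftrightarrow> I \<subseteq> V \<and> independent_set adj I \<and>
     (\<forall>J. I \<subset> J \<and> J \<subseteq> V \<longrightarrow> \<not> independent_set adj J)"

definition separable_of_order :: "'v set \<Rightarrow> ('v \<Rightarrow> 'v \<Rightarrow> bool) \<Rightarrow> nat \<Rightarrow> bool" where
  "separable_of_order V adj p \<longleftrightarrow> p \<ge> 2 \<and>
     (\<exists>P. card P = p \<and> \<Union>P = V \<and> (\<forall>I\<in>P. I \<noteq> {}) \<and>
          (\<forall>I\<in>P. \<forall>J\<in>P. I \<noteq> J \<longrightarrow> I \<inter> J = {}) \<and>
          (\<forall>I\<in>P. maximal_independent_set V adj I) \<and>
          (\<forall>I\<in>P. \<forall>J\<in>P. I \<noteq> J \<longrightarrow> (\<forall>u\<in>I. \<forall>v\<in>J. adj u v)))"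

definition prefs :: "'v set \<Rightarrow> ('v \<Rightarrow> 'v \<Rightarrow> bool) \<Rightarrow> ('v \<Rightarrow> 'v list) set" where
  "prefs V adj = {\<sigma>. (\<forall>v\<in>V. distinct (\<sigma> v) \<and> set (\<sigma> v) = {u. adj v u}) \<and>
                      (\<forall>v. v \<notin> V \<longrightarrow> \<sigma> v = [])}"

definition in_W :: "('v \<Rightarrow> 'v \<Rightarrow> bool) \<Rightarrow> 'v list \<Rightarrow> bool" where
  "in_W adj w \<longleftrightarrow> (\<forall>i\<in>set w. \<forall>j\<in>set w. \<not> adj i j)"

definition admissible ::
  "'v set \<Rightarrow> ('v \<Rightarrow> 'v \<Rightarrow> bool) \<Rightarrow> ('v \<Rightarrow> 'v list) pmf \<Rightarrow>
   ('v list \<Rightarrow> 'v \<Rightarrow> ('v \<Rightarrow> 'v list) \<Rightarrow> 'v list) \<Rightarrow> bool" where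
  "admissible V adj \<nu> step \<longleftrightarrow> set_pmf \<nu> \<subseteq> prefs V adj \<and>
     (\<forall>w v \<sigma>. set w \<subseteq> V \<and> in_W adj w \<and> v \<in> V \<and> \<sigma> \<in> prefs V adj \<longrightarrow>
        (if (\<forall>u\<in>set w. \<not> adj u v) then step w v \<sigma> = w @ [v]
         else (\<exists>k<length w. adj (w ! k) v \<and> step w v \<sigma> = take k w @ drop (Suc k) w)))"

definition lcfm :: "('v \<Rightarrow> 'v \<Rightarrow> bool) \<Rightarrow> 'v list \<Rightarrow> 'v \<Rightarrow> ('v \<Rightarrow> 'v list) \<Rightarrow> 'v list" where
  "lcfm adj w v \<sigma> =
     (if (\<exists>k<length w. adj (w ! k) v)
      then (let k = (GREATEST k. k < length w \<and> adj (w ! k) v) in take k w @ drop (Suc k) w)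
      else w @ [v])"

definition Q :: "('v list \<Rightarrow> 'v \<Rightarrow> 's \<Rightarrow> 'v list) \<Rightarrow> 'v list \<Rightarrow> 's list \<Rightarrow> 'v list" where
  "Q step zs ss = foldl (\<lambda>w (x, s). step w x s) [] (zip zs ss)"

definition strong_erasing_word ::
  "'v set \<Rightarrow> ('v \<Rightarrow> 'v \<Rightarrow> bool) \<Rightarrow> ('v \<Rightarrow> 'v list) pmf \<Rightarrow>
   ('v list \<Rightarrow> 'v \<Rightarrow> ('v \<Rightarrow> 'v list) \<Rightarrow> 'v list) \<Rightarrow> 'v list \<Rightarrow> bool" where
  "strong_erasing_word V adj \<nu> step z \<longleftrightarrow> set z \<subseteq> V \<and> even (length z) \<and>
     (\<forall>i\<in>V. \<forall>j\<in>V. \<not> adj i j \<longrightarrow>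
        (\<forall>s s'. length s = 2 \<and> length s' = length z \<and> set s \<subseteq> set_pmf \<nu> \<and> set s' \<subseteq> set_pmf \<nu> \<longrightarrow>
           Q step ([i, j] @ z) (s @ s') = [])) \<and>
     (\<forall>l < length z div 2. \<forall>s'. length s' = length z \<and> set s' \<subseteq> set_pmf \<nu> \<longrightarrow>
        Q step (drop (2 * l) z) (drop (2 * l) s') = [])"

end

theory Submission
  imports Defs
begin

(*
  (i) In a complete multipartite graph the buffer always lies inside one part, so every
  admissible policy changes its length deterministically: an arrival from that part is
  queued, any other arrival is matched.  Recording only a representative of the part and
  the length, one checks that for a triangle a, b, c the word b c a c a b empties the
  buffer after any two non-adjacent letters, and from each of its even suffixes.

  (ii) Under LCFM, feeding an edge u v to a buffer that is empty or a non-adjacent pair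
  again yields such a buffer.  A non-adjacent pair x y is erased by the edges of an odd
  walk from y to x, which exists since the graph is connected and not bipartite.
  Concatenating these words over the finitely many pairs gives one word erasing them all,
  and as a word of edges all its even suffixes erase the empty buffer.
*)

lemma simple_graph_sym: "simple_graph V adj \<Longrightarrow> adj u v \<Longrightarrow> adj v u"
  by (simp add: simple_graph_def)

lemma simple_graph_irrefl: "simple_graph V adj \<Longrightarrow> \<not> adj v v"
  by (simp add: simple_graph_def)

lemma simple_graph_adj_in_V: "simple_graph V adj \<Longrightarrow> adj u v \<Longrightarrow> u \<in> V \<and> v \<in> V"
  by (simp add: simple_graph_def)

lemma simple_graph_symp: "simple_graph V adj \<Longrightarrow> symp adj"
  by (auto simp: simple_graph_def intro: sympI)

section \<open>Separable graphs under an arbitrary admissible policy\<close>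

lemma separable_of_orderE:
  assumes "separable_of_order V adj p"
  obtains P where "card P = p" "\<Union>P = V" "\<forall>I\<in>P. I \<noteq> {}"
    "\<forall>I\<in>P. maximal_independent_set V adj I"
    "\<forall>I\<in>P. \<forall>J\<in>P. I \<noteq> J \<longrightarrow> (\<forall>u\<in>I. \<forall>v\<in>J. adj u v)"
  using assms unfolding separable_of_order_def by (elim conjE exE) (rule that)

text \<open>For a loopless graph, transitivity of non-adjacency says that non-adjacency is an
  equivalence relation; its classes are the parts.\<close>

definition complete_multipartite :: "'v set \<Rightarrow> ('v \<Rightarrow> 'v \<Rightarrow> bool) \<Rightarrow> bool" where
  "complete_multipartite V adj \<longleftrightarrow>
     (\<forall>u\<in>V. \<forall>v\<in>V. \<forall>w\<in>V. \<not> adj u v \<longrightarrow> \<not> adj v w \<longrightarrow> \<not> adj u w)"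

lemma separable_complete_multipartite:
  assumes "separable_of_order V adj p"
  shows "complete_multipartite V adj"
  unfolding complete_multipartite_def
proof (intro ballI impI)
  obtain P where UP: "\<Union>P = V" and mis: "\<forall>I\<in>P. maximal_independent_set V adj I"
    and cross: "\<forall>I\<in>P. \<forall>J\<in>P. I \<noteq> J \<longrightarrow> (\<forall>u\<in>I. \<forall>v\<in>J. adj u v)"
    using separable_of_orderE[OF assms] by metis
  have same_part: "y \<in> I" if "I \<in> P" "x \<in> I" "y \<in> V" "\<not> adj x y" for I x y
  proof -
    obtain J where "J \<in> P" "y \<in> J"
      using UP \<open>y \<in> V\<close> by blast
    then show ?thesis
      using cross that by metis
  qed
  fix u v w assume "u \<in> V" "v \<in> V" "w \<in> V" "\<not> adj u v" "\<not> adj v w"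
  then obtain I where I: "I \<in> P" "u \<in> I" "v \<in> I" "w \<in> I"
    using UP same_part by blast
  then have "independent_set adj I"
    using mis by (simp add: maximal_independent_set_def)
  then show "\<not> adj u w"
    using I by (simp add: independent_set_def)
qed

lemma separable_order_ge_3_triangle:
  assumes "separable_of_order V adj p" and "p \<ge> 3"
  obtains a b c where "a \<in> V" "b \<in> V" "c \<in> V" "adj a b" "adj b c" "adj a c"
proof -
  obtain P where cP: "card P = p" and UP: "\<Union>P = V" and ne: "\<forall>I\<in>P. I \<noteq> {}"
    and "\<forall>I\<in>P. maximal_independent_set V adj I"
    and cross: "\<forall>I\<in>P. \<forall>J\<in>P. I \<noteq> J \<longrightarrow> (\<forall>u\<in>I. \<forall>v\<in>J. adj u v)"
    by (rule separable_of_orderE[OF assms(1)])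
  obtain T where "T \<subseteq> P" "card T = 3"
    using obtain_subset_with_card_n[of 3 P] cP assms(2) by auto
  then obtain A B C where P: "A \<in> P" "B \<in> P" "C \<in> P" and "A \<noteq> B" "B \<noteq> C" "A \<noteq> C"
    unfolding card_3_iff by auto
  obtain a b c where "a \<in> A" "b \<in> B" "c \<in> C"
    using ne P by (meson all_not_in_conv)
  show ?thesis
  proof (rule that)
    show "a \<in> V" "b \<in> V" "c \<in> V"
      using UP P \<open>a \<in> A\<close> \<open>b \<in> B\<close> \<open>c \<in> C\<close> by auto
    show "adj a b" "adj b c" "adj a c"
      using cross P \<open>A \<noteq> B\<close> \<open>B \<noteq> C\<close> \<open>A \<noteq> C\<close> \<open>a \<in> A\<close> \<open>b \<in> B\<close> \<open>c \<in> C\<close>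
      by auto
  qed
qed

text \<open>The state \<open>(r, n)\<close> abstracts a buffer of length \<open>n\<close> whose letters lie in the part
  of \<open>r\<close>; once the buffer is empty the next arrival becomes the representative.\<close>

fun count_step :: "('v \<Rightarrow> 'v \<Rightarrow> bool) \<Rightarrow> 'v \<times> nat \<Rightarrow> 'v \<Rightarrow> 'v \<times> nat" where
  "count_step adj (r, n) v = (if n = 0 then (v, 1) else if adj r v then (r, n - 1) else (r, Suc n))"

definition tracked_by :: "'v set \<Rightarrow> ('v \<Rightarrow> 'v \<Rightarrow> bool) \<Rightarrow> 'v \<times> nat \<Rightarrow> 'v list \<Rightarrow> bool" where
  "tracked_by V adj st w \<longleftrightarrow>
     fst st \<in> V \<and> length w = snd st \<and> (\<forall>u\<in>set w. u \<in> V \<and> \<not> adj u (fst st))"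

lemma admissible_step_tracked_by:
  assumes sg: "simple_graph V adj" and cm: "complete_multipartite V adj"
    and ad: "admissible V adj \<nu> step"
    and tr: "tracked_by V adj (r, n) w" and v: "v \<in> V" and \<sigma>: "\<sigma> \<in> prefs V adj"
  shows "tracked_by V adj (count_step adj (r, n) v) (step w v \<sigma>)"
proof -
  have r: "r \<in> V" and len: "length w = n" and w: "\<And>u. u \<in> set w \<Longrightarrow> u \<in> V \<and> \<not> adj u r"
    using tr by (auto simp: tracked_by_def)
  have wV: "set w \<subseteq> V"
    using w by blast
  have r_w: "\<not> adj r u" if "u \<in> set w" for u
    using w[OF that] simple_graph_sym[OF sg, of r u] by blast
  have trans: "\<not> adj x z" if "x \<in> V" "y \<in> V" "z \<in> V" "\<not> adj x y" "\<not> adj y z" for x y z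
    using cm that unfolding complete_multipartite_def by blast
  have "in_W adj w"
    unfolding in_W_def
  proof (intro ballI)
    fix x y assume "x \<in> set w" "y \<in> set w"
    then show "\<not> adj x y"
      using trans[of x r y] w r_w r by blast
  qed
  with ad wV v \<sigma> have step: "if \<forall>u\<in>set w. \<not> adj u v then step w v \<sigma> = w @ [v]
      else \<exists>k<length w. adj (w ! k) v \<and> step w v \<sigma> = take k w @ drop (Suc k) w"
    unfolding admissible_def by blast
  consider "n = 0" | "n \<noteq> 0" "\<not> adj r v" | "n \<noteq> 0" "adj r v"
    by blast
  then show ?thesis
  proof cases
    case 1
    then show ?thesis
      using step len v simple_graph_irrefl[OF sg] by (simp add: tracked_by_def)
  next
    case 2
    then have "\<forall>u\<in>set w. \<not> adj u v"
      using w r v trans by blast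
    moreover have "\<not> adj v r"
      using 2 simple_graph_sym[OF sg, of v r] by blast
    ultimately show ?thesis
      using 2 step len r w v by (auto simp: tracked_by_def)
  next
    case 3
    obtain u where u: "u \<in> set w"
      using 3 len by (cases w) auto
    then have "adj u v"
      using 3 w[OF u] r v r_w[OF u] trans[of r u v] by blast
    then obtain k where k: "k < length w" "step w v \<sigma> = take k w @ drop (Suc k) w"
      using step u by (auto split: if_splits)
    then have "set (step w v \<sigma>) \<subseteq> set w"
      by (auto dest: in_set_takeD in_set_dropD)
    moreover have "length (step w v \<sigma>) = n - 1"
      using k len by simp
    ultimately show ?thesis
      using 3 r w by (auto simp: tracked_by_def)
  qed
qed

lemma admissible_run_tracked_by:
  assumes sg: "simple_graph V adj" and cm: "complete_multipartite V adj"
    and ad: "admissible V adj \<nu> step"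
  shows "tracked_by V adj st w \<Longrightarrow> length ss = length xs \<Longrightarrow> set xs \<subseteq> V \<Longrightarrow>
    set ss \<subseteq> prefs V adj \<Longrightarrow>
    tracked_by V adj (foldl (count_step adj) st xs) (foldl (\<lambda>w (x, s). step w x s) w (zip xs ss))"
proof (induction xs arbitrary: ss st w)
  case Nil
  then show ?case by simp
next
  case (Cons x xs)
  then obtain s ss' where ss: "ss = s # ss'"
    by (cases ss) auto
  obtain r n where st: "st = (r, n)"
    by (cases st)
  have "tracked_by V adj (count_step adj st x) (step w x s)"
    using admissible_step_tracked_by[OF sg cm ad] Cons.prems ss st by simp
  then show ?case
    using Cons.IH[of "count_step adj st x" "step w x s" ss'] Cons.prems ss by simp
qed

lemma Q_eq_Nil_if_count_vanishes:
  assumes sg: "simple_graph V adj" and cm: "complete_multipartite V adj"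
    and ad: "admissible V adj \<nu> step" and r: "r \<in> V"
    and len: "length ss = length xs" and xs: "set xs \<subseteq> V" and ss: "set ss \<subseteq> set_pmf \<nu>"
    and vanish: "snd (foldl (count_step adj) (r, 0) xs) = 0"
  shows "Q step xs ss = []"
proof -
  have "set ss \<subseteq> prefs V adj"
    using ss ad by (auto simp: admissible_def)
  moreover have "tracked_by V adj (r, 0) []"
    using r by (simp add: tracked_by_def)
  ultimately have "tracked_by V adj (foldl (count_step adj) (r, 0) xs) (Q step xs ss)"
    unfolding Q_def using admissible_run_tracked_by[OF sg cm ad] len xs by blast
  then show ?thesis
    using vanish by (simp add: tracked_by_def)
qed

lemma strong_erasing_word_of_triangle:
  assumes sg: "simple_graph V adj" and cm: "complete_multipartite V adj"
    and ad: "admissible V adj \<nu> step"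
    and V: "a \<in> V" "b \<in> V" "c \<in> V" and tri: "adj a b" "adj b c" "adj a c"
  shows "strong_erasing_word V adj \<nu> step [b, c, a, c, a, b]"
proof -
  let ?z = "[b, c, a, c, a, b]"
  have prefix: "Q step ([i, j] @ ?z) (s @ s') = []"
    if "i \<in> V" "j \<in> V" "\<not> adj i j" "length s = 2" "length s' = 6"
      "set s \<subseteq> set_pmf \<nu>" "set s' \<subseteq> set_pmf \<nu>" for i j s s'
  proof (rule Q_eq_Nil_if_count_vanishes[OF sg cm ad \<open>a \<in> V\<close>])
    have two_nonadj: "\<not> adj x y" if "x \<in> V" "y \<in> V" "\<not> adj i x" "\<not> adj i y" for x y
      using cm \<open>i \<in> V\<close> that simple_graph_sym[OF sg, of x i]
      unfolding complete_multipartite_def by blast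
    have "adj i a \<or> adj i b" "adj i b \<or> adj i c" "adj i a \<or> adj i c"
      using two_nonadj[of a b] two_nonadj[of b c] two_nonadj[of a c] V tri by auto
    then show "snd (foldl (count_step adj) (a, 0) ([i, j] @ ?z)) = 0"
      using \<open>\<not> adj i j\<close> tri by (cases "adj i a"; cases "adj i b"; cases "adj i c") simp_all
  qed (use that V in auto)
  have suffix: "Q step (drop (2 * l) ?z) (drop (2 * l) s') = []"
    if "l < 3" "length s' = 6" "set s' \<subseteq> set_pmf \<nu>" for l s'
  proof (rule Q_eq_Nil_if_count_vanishes[OF sg cm ad \<open>a \<in> V\<close>])
    show "snd (foldl (count_step adj) (a, 0) (drop (2 * l) ?z)) = 0"
      using \<open>l < 3\<close> tri by (auto simp: less_Suc_eq numeral_3_eq_3)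
  qed (use that V in \<open>auto dest: in_set_dropD\<close>)
  show ?thesis
    unfolding strong_erasing_word_def using prefix suffix V by auto
qed

section \<open>Non-bipartite graphs under last-come-first-matched\<close>

lemma relpowp_symp: "symp R \<Longrightarrow> (R ^^ n) x y \<Longrightarrow> (R ^^ n) y x"
proof (induction n arbitrary: y)
  case (Suc n)
  then obtain z where "(R ^^ n) x z" "R z y"
    by (auto elim: relpowp_Suc_E)
  then show ?case
    using Suc by (metis relpowp_Suc_I2 sympD)
qed simp

lemma connected_graph_walk: "connected_graph V adj \<Longrightarrow> x \<in> V \<Longrightarrow> y \<in> V \<Longrightarrow> \<exists>n. (adj ^^ n) x y"
  unfolding connected_graph_def rtranclp_power[symmetric] by blast

lemma odd_closed_walk:
  assumes sg: "simple_graph V adj" and cn: "connected_graph V adj"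
    and nb: "\<not> bipartite V adj" and x: "x \<in> V"
  obtains c where "odd c" "(adj ^^ c) x x"
proof -
  define even_reach where "even_reach u \<longleftrightarrow> (\<exists>n. even n \<and> (adj ^^ n) x u)" for u
  obtain u v where "u \<in> V" "v \<in> V" "adj u v" and same: "even_reach u = even_reach v"
    using nb unfolding bipartite_def by blast
  obtain n where n: "(adj ^^ n) x u"
    using connected_graph_walk[OF cn x \<open>u \<in> V\<close>] by blast
  have "(adj ^^ Suc n) x v"
    using n \<open>adj u v\<close> by (rule relpowp_Suc_I)
  then have "even_reach u \<or> even_reach v"
    using n unfolding even_reach_def by (metis even_Suc)
  then obtain n1 n2 where "even n1" "(adj ^^ n1) x u" "even n2" "(adj ^^ n2) x v"
    using same unfolding even_reach_def by auto
  then have "(adj ^^ (Suc n1 + n2)) x x"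
    using \<open>adj u v\<close> relpowp_symp[OF simple_graph_symp[OF sg]]
    by (metis relpowp_Suc_I relpowp_trans)
  moreover have "odd (Suc n1 + n2)"
    using \<open>even n1\<close> \<open>even n2\<close> by simp
  ultimately show ?thesis
    using that by blast
qed

lemma odd_walk:
  assumes sg: "simple_graph V adj" and cn: "connected_graph V adj"
    and nb: "\<not> bipartite V adj" and "x \<in> V" "y \<in> V"
  obtains m where "(adj ^^ (2 * m + 1)) x y"
proof -
  obtain n where n: "(adj ^^ n) x y"
    using connected_graph_walk[OF cn assms(4,5)] by blast
  obtain c where "odd c" and closed: "(adj ^^ c) x x"
    using odd_closed_walk[OF sg cn nb \<open>x \<in> V\<close>] .
  have "(adj ^^ (c + n)) x y"
    using closed n by (rule relpowp_trans)
  moreover have "odd n \<or> odd (c + n)"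
    using \<open>odd c\<close> by auto
  ultimately have "\<exists>k. odd k \<and> (adj ^^ k) x y"
    using n by blast
  then show ?thesis
    using that by (metis oddE)
qed

lemma lcfm_no_adj: "\<forall>u\<in>set w. \<not> adj u v \<Longrightarrow> lcfm adj w v \<sigma> = w @ [v]"
  unfolding lcfm_def by (auto dest: nth_mem)

lemma lcfm_snoc_adj: "adj u v \<Longrightarrow> lcfm adj (w @ [u]) v \<sigma> = w"
proof -
  assume uv: "adj u v"
  have "(GREATEST k. k < length (w @ [u]) \<and> adj ((w @ [u]) ! k) v) = length w"
    by (rule Greatest_equality) (auto simp: uv)
  moreover have "\<exists>k<length (w @ [u]). adj ((w @ [u]) ! k) v"
    using uv by (intro exI[of _ "length w"]) auto
  ultimately show ?thesis
    unfolding lcfm_def Let_def by simp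
qed

lemma lcfm_Cons_adj: "adj x v \<Longrightarrow> \<forall>u\<in>set w. \<not> adj u v \<Longrightarrow> lcfm adj (x # w) v \<sigma> = w"
proof -
  assume xv: "adj x v" and w: "\<forall>u\<in>set w. \<not> adj u v"
  have "(GREATEST k. k < length (x # w) \<and> adj ((x # w) ! k) v) = 0"
    by (rule Greatest_equality) (use xv w in \<open>auto simp: nth_Cons split: nat.splits dest: nth_mem\<close>)
  moreover have "\<exists>k<length (x # w). adj ((x # w) ! k) v"
    using xv by (intro exI[of _ 0]) auto
  ultimately show ?thesis
    unfolding lcfm_def Let_def by simp
qed

text \<open>LCFM ignores the preferences, so runs are taken with a dummy one.\<close>

definition lcfm_run :: "('v \<Rightarrow> 'v \<Rightarrow> bool) \<Rightarrow> 'v list \<Rightarrow> 'v list \<Rightarrow> 'v list" where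
  "lcfm_run adj w xs = foldl (\<lambda>w x. lcfm adj w x (\<lambda>_. [])) w xs"

lemma lcfm_run_simps [simp]:
  "lcfm_run adj w [] = w"
  "lcfm_run adj w (x # xs) = lcfm_run adj (lcfm adj w x (\<lambda>_. [])) xs"
  "lcfm_run adj w (xs @ ys) = lcfm_run adj (lcfm_run adj w xs) ys"
  by (simp_all add: lcfm_run_def)

lemma Q_lcfm:
  assumes "length ss = length xs"
  shows "Q (lcfm adj) xs ss = lcfm_run adj [] xs"
proof -
  have "foldl (\<lambda>w (x, s). lcfm adj w x s) w (zip xs ss) = lcfm_run adj w xs" for w
    using assms
  proof (induction xs arbitrary: w ss)
    case (Cons x xs)
    then obtain s ss' where "ss = s # ss'"
      by (cases ss) auto
    moreover have "lcfm adj w x s = lcfm adj w x (\<lambda>_. [])"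
      by (simp add: lcfm_def)
    ultimately show ?case
      using Cons by simp
  qed simp
  then show ?thesis
    unfolding Q_def by blast
qed

definition pairs_word :: "('v \<times> 'v) list \<Rightarrow> 'v list" where
  "pairs_word ps = concat (map (\<lambda>(a, b). [a, b]) ps)"

lemma pairs_word_simps [simp]:
  "pairs_word [] = []"
  "pairs_word ((a, b) # ps) = a # b # pairs_word ps"
  "pairs_word (ps @ qs) = pairs_word ps @ pairs_word qs"
  by (simp_all add: pairs_word_def)

lemma length_pairs_word: "length (pairs_word ps) = 2 * length ps"
  by (induction ps) auto

lemma drop_pairs_word: "drop (2 * l) (pairs_word ps) = pairs_word (drop l ps)"
proof (induction l arbitrary: ps)
  case (Suc l)
  then show ?case
    by (cases ps) auto
qed simp

lemma set_pairs_word: "set (pairs_word ps) = fst ` set ps \<union> snd ` set ps"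
  by (induction ps) force+

lemma lcfm_run_edges: "\<forall>(a, b)\<in>set ps. adj a b \<Longrightarrow> lcfm_run adj [] (pairs_word ps) = []"
  by (induction ps) (auto simp: lcfm_no_adj lcfm_snoc_adj[where w = "[]", simplified])

definition pair_state :: "'v set \<Rightarrow> ('v \<Rightarrow> 'v \<Rightarrow> bool) \<Rightarrow> 'v list \<Rightarrow> bool" where
  "pair_state V adj w \<longleftrightarrow> w = [] \<or> (\<exists>x y. w = [x, y] \<and> x \<in> V \<and> y \<in> V \<and> \<not> adj x y)"

lemma pair_state_lcfm_run_edge:
  assumes sg: "simple_graph V adj" and w: "pair_state V adj w" and uv: "adj u v"
  shows "pair_state V adj (lcfm_run adj w [u, v])"
proof (cases "w = []")
  case True
  then show ?thesis
    using uv lcfm_snoc_adj[of adj u v "[]"] by (simp add: lcfm_no_adj pair_state_def)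
next
  case False
  then obtain x y where xy: "w = [x, y]" "x \<in> V" "y \<in> V" "\<not> adj x y"
    using w by (auto simp: pair_state_def)
  have "v \<in> V"
    using simple_graph_adj_in_V[OF sg uv] by simp
  consider "adj y u" | "\<not> adj y u" "adj x u" | "\<not> adj y u" "\<not> adj x u"
    by blast
  then show ?thesis
  proof cases
    case 1
    then have "lcfm adj [x, y] u (\<lambda>_. []) = [x]"
      using lcfm_snoc_adj[of adj y u "[x]"] by simp
    then show ?thesis
      using xy \<open>v \<in> V\<close> lcfm_snoc_adj[of adj x v "[]"]
      by (cases "adj x v") (auto simp: lcfm_no_adj pair_state_def)
  next
    case 2
    then have "lcfm adj [x, y] u (\<lambda>_. []) = [y]"
      by (simp add: lcfm_Cons_adj)
    moreover have "\<not> adj y x"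
      using xy simple_graph_sym[OF sg, of y x] by blast
    ultimately show ?thesis
      using xy \<open>v \<in> V\<close> lcfm_snoc_adj[of adj y v "[]"]
      by (cases "adj y v") (auto simp: lcfm_no_adj pair_state_def)
  next
    case 3
    then have "lcfm adj [x, y] u (\<lambda>_. []) = [x, y] @ [u]"
      by (simp add: lcfm_no_adj)
    then show ?thesis
      using xy uv lcfm_snoc_adj[of adj u v "[x, y]"] by (simp add: pair_state_def)
  qed
qed

lemma pair_state_lcfm_run_edges:
  assumes sg: "simple_graph V adj"
  shows "pair_state V adj w \<Longrightarrow> \<forall>(a, b)\<in>set ps. adj a b \<Longrightarrow>
    pair_state V adj (lcfm_run adj w (pairs_word ps))"
proof (induction ps arbitrary: w)
  case (Cons p ps)
  obtain a b where p: "p = (a, b)"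
    by (cases p)
  then have "pair_state V adj (lcfm_run adj w [a, b])"
    using pair_state_lcfm_run_edge[OF sg Cons.prems(1)] Cons.prems(2) by simp
  then show ?case
    using Cons.IH[of "lcfm_run adj w [a, b]"] Cons.prems(2) p by simp
qed simp

lemma lcfm_erase_pair_along_odd_walk:
  assumes sg: "simple_graph V adj"
  shows "(adj ^^ (2 * m + 1)) y x \<Longrightarrow> \<not> adj x y \<Longrightarrow>
    \<exists>ps. (\<forall>(a, b)\<in>set ps. adj a b) \<and> lcfm_run adj [x, y] (pairs_word ps) = []"
proof (induction m arbitrary: y)
  case 0
  then have "adj y x"
    by (simp only: mult_0_right add_0 relpowp_1)
  then show ?case
    using 0 simple_graph_sym[OF sg, of y x] by simp
next
  case (Suc m)
  have "2 * Suc m + 1 = Suc (Suc (2 * m + 1))"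
    by simp
  with Suc.prems(1) obtain b where "adj y b" and "(adj ^^ Suc (2 * m + 1)) b x"
    by (metis relpowp_Suc_E2)
  then obtain c where "adj b c" and walk: "(adj ^^ (2 * m + 1)) c x"
    by (metis relpowp_Suc_E2)
  have run_bc: "lcfm_run adj [x, y] [b, c] = lcfm adj [x] c (\<lambda>_. [])"
    using \<open>adj y b\<close> lcfm_snoc_adj[of adj y b "[x]"] by simp
  show ?case
  proof (cases "adj x c")
    case True
    then have "lcfm_run adj [x, y] (pairs_word [(b, c)]) = []"
      using run_bc lcfm_snoc_adj[of adj x c "[]"] by simp
    then show ?thesis
      using \<open>adj b c\<close> by (intro exI[of _ "[(b, c)]"]) simp
  next
    case False
    then obtain ps where "\<forall>(a, b)\<in>set ps. adj a b" "lcfm_run adj [x, c] (pairs_word ps) = []"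
      using Suc.IH[OF walk] by blast
    moreover have "lcfm_run adj [x, y] [b, c] = [x, c]"
      using run_bc False by (simp add: lcfm_no_adj)
    ultimately show ?thesis
      using \<open>adj b c\<close> by (intro exI[of _ "(b, c) # ps"]) simp
  qed
qed

lemma lcfm_erase_pair_state:
  assumes sg: "simple_graph V adj" and cn: "connected_graph V adj"
    and nb: "\<not> bipartite V adj" and w: "pair_state V adj w"
  obtains ps where "\<forall>(a, b)\<in>set ps. adj a b" "lcfm_run adj w (pairs_word ps) = []"
proof (cases "w = []")
  case True
  then show ?thesis
    using that[of "[]"] by simp
next
  case False
  then obtain x y where "w = [x, y]" "x \<in> V" "y \<in> V" "\<not> adj x y"
    using w by (auto simp: pair_state_def)
  moreover obtain m where "(adj ^^ (2 * m + 1)) y x"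
    using odd_walk[OF sg cn nb \<open>y \<in> V\<close> \<open>x \<in> V\<close>] .
  ultimately show ?thesis
    using lcfm_erase_pair_along_odd_walk[OF sg] that by blast
qed

lemma lcfm_synchronizing_edge_word:
  assumes sg: "simple_graph V adj" and cn: "connected_graph V adj"
    and nb: "\<not> bipartite V adj"
  shows "finite S \<Longrightarrow> \<forall>w\<in>S. pair_state V adj w \<Longrightarrow>
    \<exists>ps. (\<forall>(a, b)\<in>set ps. adj a b) \<and> (\<forall>w\<in>S. lcfm_run adj w (pairs_word ps) = [])"
proof (induction S rule: finite_induct)
  case empty
  show ?case
    by (intro exI[of _ "[]"]) simp
next
  case (insert w S)
  then obtain ps where ps: "\<forall>(a, b)\<in>set ps. adj a b" "\<forall>w\<in>S. lcfm_run adj w (pairs_word ps) = []"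
    by auto
  have "pair_state V adj (lcfm_run adj w (pairs_word ps))"
    using pair_state_lcfm_run_edges[OF sg _ ps(1)] insert.prems by simp
  then obtain qs where qs: "\<forall>(a, b)\<in>set qs. adj a b"
    "lcfm_run adj (lcfm_run adj w (pairs_word ps)) (pairs_word qs) = []"
    using lcfm_erase_pair_state[OF sg cn nb] by blast
  show ?case
  proof (intro exI[of _ "ps @ qs"] conjI)
    show "\<forall>(a, b)\<in>set (ps @ qs). adj a b"
      using ps(1) qs(1) by auto
    show "\<forall>w'\<in>insert w S. lcfm_run adj w' (pairs_word (ps @ qs)) = []"
      using ps(2) qs(2) lcfm_run_edges[OF qs(1)] by auto
  qed
qed

lemma lcfm_strong_erasing_word:
  assumes sg: "simple_graph V adj" and cn: "connected_graph V adj"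
    and nb: "\<not> bipartite V adj"
  shows "\<exists>z. strong_erasing_word V adj \<nu> (lcfm adj) z"
proof -
  define S where "S = {[i, j] | i j. i \<in> V \<and> j \<in> V \<and> \<not> adj i j}"
  have "finite V"
    using sg by (simp add: simple_graph_def)
  moreover have "S \<subseteq> (\<lambda>(i, j). [i, j]) ` (V \<times> V)"
    unfolding S_def by auto
  ultimately have "finite S"
    by (auto intro: finite_subset)
  moreover have "\<forall>w\<in>S. pair_state V adj w"
    unfolding S_def pair_state_def by auto
  ultimately obtain ps where edges: "\<forall>(a, b)\<in>set ps. adj a b"
    and erase: "\<forall>w\<in>S. lcfm_run adj w (pairs_word ps) = []"
    using lcfm_synchronizing_edge_word[OF sg cn nb] by blast
  have "Q (lcfm adj) ([i, j] @ pairs_word ps) (s @ s') = []"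
    if "i \<in> V" "j \<in> V" "\<not> adj i j" "length s = 2" "length s' = length (pairs_word ps)" for i j s s'
  proof -
    have "lcfm_run adj [] [i, j] = [i, j]"
      using \<open>\<not> adj i j\<close> by (simp add: lcfm_no_adj)
    moreover have "[i, j] \<in> S"
      unfolding S_def using that by auto
    ultimately show ?thesis
      using that erase by (simp add: Q_lcfm)
  qed
  moreover have "Q (lcfm adj) (drop (2 * l) (pairs_word ps)) (drop (2 * l) s') = []"
    if "length s' = length (pairs_word ps)" for l s'
  proof -
    have "\<forall>(a, b)\<in>set (drop l ps). adj a b"
      using edges by (auto dest: in_set_dropD)
    then show ?thesis
      using that lcfm_run_edges
      by (subst Q_lcfm) (simp_all add: drop_pairs_word length_pairs_word)
  qed
  moreover have "set (pairs_word ps) \<subseteq> V"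
    unfolding set_pairs_word using edges simple_graph_adj_in_V[OF sg] by fastforce
  ultimately show ?thesis
    unfolding strong_erasing_word_def
    by (intro exI[of _ "pairs_word ps"]) (auto simp: length_pairs_word)
qed

theorem mainTheorem11:
  fixes V :: "'v set" and adj :: "'v \<Rightarrow> 'v \<Rightarrow> bool"
  assumes "simple_graph V adj" and "connected_graph V adj"
  shows "((\<exists>p \<ge> 3. separable_of_order V adj p) \<longrightarrow>
            (\<forall>\<nu> step. admissible V adj \<nu> step \<longrightarrow> (\<exists>z. strong_erasing_word V adj \<nu> step z)))
       \<and> (\<not> bipartite V adj \<longrightarrow>
            (\<forall>\<nu>. admissible V adj \<nu> (lcfm adj) \<longrightarrow> (\<exists>z. strong_erasing_word V adj \<nu> (lcfm adj) z)))"
proof (intro conjI impI allI)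
  fix \<nu> step
  assume "\<exists>p \<ge> 3. separable_of_order V adj p" and ad: "admissible V adj \<nu> step"
  then obtain p where sep: "separable_of_order V adj p" and "p \<ge> 3"
    by blast
  then obtain a b c where "a \<in> V" "b \<in> V" "c \<in> V" "adj a b" "adj b c" "adj a c"
    by (rule separable_order_ge_3_triangle)
  then show "\<exists>z. strong_erasing_word V adj \<nu> step z"
    using strong_erasing_word_of_triangle[OF assms(1) separable_complete_multipartite[OF sep] ad]
    by blast
next
  fix \<nu>
  assume "\<not> bipartite V adj"
  then show "\<exists>z. strong_erasing_word V adj \<nu> (lcfm adj) z"
    using lcfm_strong_erasing_word[OF assms] by blast
qed

end
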